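(* Let $n\in\mathbb{N}$, $1<p<q$, $0<\omega<\omega_{p,q}$, and let $u$ be the positive solution of $$u''+\frac{n-1}{r}u'+f(u)=0\ (r>0),\qquad u'(0)=0,\qquad \lim_{r\to\infty}u(r)=0,$$ with $f(u)=-\omega u+u^p-u^q$. Define $$P(r)=r^n\big[u'(r)^2+2F(u(r))\big]+(n-2)r^{n-1}u(r)u'(r),\qquad F(u)=\int_0^u f(s)\,ds.$$ Then $P(r)>0$ for all $r>0$.
   Context: $\omega_{p,q}=\frac{2(q-p)}{(p+1)(q-1)}\left[\frac{(p-1)(q+1)}{(p+1)(q-1)}\right]^{\frac{p-1}{q-p}}$; for such $\omega$ the positive solution exists and is unique. *)

theory Defs
  imports "HOL-Analysis.Analysis"
begin

definition omega_pq :: "real \<Rightarrow> real \<Rightarrow> real" where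
  "omega_pq p q = 2 * (q - p) / ((p + 1) * (q - 1)) *
     (((p - 1) * (q + 1)) / ((p + 1) * (q - 1))) powr ((p - 1) / (q - p))"

definition nonlin :: "real \<Rightarrow> real \<Rightarrow> real \<Rightarrow> real \<Rightarrow> real" where
  "nonlin \<omega> p q s = - \<omega> * s + s powr p - s powr q"

definition Prim :: "real \<Rightarrow> real \<Rightarrow> real \<Rightarrow> real \<Rightarrow> real" where
  "Prim \<omega> p q x = integral {0..x} (nonlin \<omega> p q)"

definition Pohozaev :: "nat \<Rightarrow> real \<Rightarrow> real \<Rightarrow> real \<Rightarrow> (real \<Rightarrow> real) \<Rightarrow> (real \<Rightarrow> real) \<Rightarrow> real \<Rightarrow> real" where
  "Pohozaev n \<omega> p q u u' r =
     r ^ n * ((u' r)\<^sup>2 + 2 * Prim \<omega> p q (u r)) + (real n - 2) * r ^ (n - 1) * u r * u' r"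

end

theory Submission
  imports Defs
begin

(* Differentiating and using the equation gives P'(r) = r^(n-1) u^2 g(u), where
   g(s) = (2n F(s) - (n-2) s f(s)) / s^2.  The proof combines three ingredients.
   1. The nonlinearity: f(s)/s is unimodal; \<omega> < omega_pq makes F positive somewhere, so the
      largest zero beta of f has F(beta) > 0 and hence g(beta) > 0; g < 0 near 0, and g'
      changes sign at most once, so on (0, beta] the set where g \<le> 0 is an initial interval.
   2. The ODE: the energy u'^2/2 + F(u) decreases to 0, so F(u(0)) \<ge> 0; comparing the values
      of u at a minimum and at a later maximum shows u' \<le> 0, hence u(0) \<le> beta; far out
      u'' \<ge> (\<omega>/2) u, so u and u' decay exponentially.
   3. Therefore P tends to 0 at 0 and at infinity, and along the decreasing orbit g(u(r)) is
      first positive and then nonpositive: P increases from 0 and then decreases to 0, so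
      P > 0.
   The file follows this order: nonlinearity, two analysis lemmas, the locale ground_state
   for the ODE, the function P, and finally the theorem. *)

definition Fprim :: "real \<Rightarrow> real \<Rightarrow> real \<Rightarrow> real \<Rightarrow> real" where
  "Fprim \<omega> p q x = - \<omega> * x\<^sup>2 / 2 + x powr (p + 1) / (p + 1) - x powr (q + 1) / (q + 1)"

definition fquot :: "real \<Rightarrow> real \<Rightarrow> real \<Rightarrow> real \<Rightarrow> real" where
  "fquot \<omega> p q s = - \<omega> + s powr (p - 1) - s powr (q - 1)"

(* The unique maximiser of fquot on (0,\<infinity>). *)
definition fquot_top :: "real \<Rightarrow> real \<Rightarrow> real" where
  "fquot_top p q = ((p - 1) / (q - 1)) powr (1 / (q - p))"

(* g(s) = (2n F(s) - (n-2) s f(s)) / s^2: the Pohozaev function P satisfies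
   P'(r) = r^(n-1) u^2 g(u). *)
definition gpoh :: "nat \<Rightarrow> real \<Rightarrow> real \<Rightarrow> real \<Rightarrow> real \<Rightarrow> real" where
  "gpoh n \<omega> p q s = - 2 * \<omega> + (2 * real n / (p + 1) - (real n - 2)) * s powr (p - 1)
      + ((real n - 2) - 2 * real n / (q + 1)) * s powr (q - 1)"

(* g'(s) = s^(p-2) * gpoh_slope(s), and gpoh_slope is monotone in s. *)
definition gpoh_slope :: "nat \<Rightarrow> real \<Rightarrow> real \<Rightarrow> real \<Rightarrow> real" where
  "gpoh_slope n p q s = (2 * real n / (p + 1) - (real n - 2)) * (p - 1)
      + ((real n - 2) - 2 * real n / (q + 1)) * (q - 1) * s powr (q - p)"

lemma powr_eq_times_powr_minus_1: "(x::real) > 0 \<Longrightarrow> x powr a = x * x powr (a - 1)"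
  using powr_add[of x 1 "a - 1"] by simp

lemma powr_eq_square_times_powr_minus_2: "(x::real) > 0 \<Longrightarrow> x powr a = x\<^sup>2 * x powr (a - 2)"
  using powr_add[of x 2 "a - 2"] by (simp add: powr_realpow[of x 2, simplified])

(* The algebra behind the Pohozaev coefficient, with A = s^(p-1), B = s^(q-1). *)
lemma gpoh_polynomial_identity:
  fixes N A B s w p q :: real
  shows "2 * N * (- w * s\<^sup>2 / 2 + s\<^sup>2 * A / (p + 1) - s\<^sup>2 * B / (q + 1))
           - (N - 2) * s * (- w * s + s * A - s * B)
         = s\<^sup>2 * (- 2 * w + (2 * N / (p + 1) - (N - 2)) * A + ((N - 2) - 2 * N / (q + 1)) * B)"
  unfolding divide_inverse by algebra

context
  fixes p q \<omega> :: real
  assumes p: "1 < p" and pq: "p < q"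
begin

lemma nonlin_eq_fquot: "s > 0 \<Longrightarrow> nonlin \<omega> p q s = s * fquot \<omega> p q s"
  unfolding nonlin_def fquot_def
  using powr_eq_times_powr_minus_1[of s p] powr_eq_times_powr_minus_1[of s q]
  by (simp add: algebra_simps)

lemma Fprim_deriv:
  assumes s: "s > 0"
  shows "(Fprim \<omega> p q has_real_derivative nonlin \<omega> p q s) (at s)"
proof -
  have "(Fprim \<omega> p q has_real_derivative
      - \<omega> * (2 * s) / 2 + (p + 1) * s powr (p + 1 - 1) / (p + 1)
      - (q + 1) * s powr (q + 1 - 1) / (q + 1)) (at s)"
    unfolding Fprim_def[abs_def]
    by (intro DERIV_diff DERIV_add DERIV_cdivide has_real_derivative_powr s)
       (auto intro!: derivative_eq_intros)
  moreover have "p + 1 \<noteq> 0" "q + 1 \<noteq> 0" using p pq by auto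
  ultimately show ?thesis by (simp add: nonlin_def)
qed

lemma Fprim_cont: "continuous_on {0..} (Fprim \<omega> p q)"
proof -
  have a: "continuous_on {0..} (\<lambda>x::real. x powr (p + 1))"
    by (rule continuous_on_powr') (use p in \<open>auto intro: continuous_intros\<close>)
  have b: "continuous_on {0..} (\<lambda>x::real. x powr (q + 1))"
    by (rule continuous_on_powr') (use p pq in \<open>auto intro: continuous_intros\<close>)
  show ?thesis unfolding Fprim_def[abs_def] by (intro continuous_intros a b) (use p pq in auto)
qed

lemma Prim_eq_Fprim:
  assumes x: "x \<ge> 0"
  shows "Prim \<omega> p q x = Fprim \<omega> p q x"
proof -
  have "(nonlin \<omega> p q has_integral (Fprim \<omega> p q x - Fprim \<omega> p q 0)) {0..x}"
  proof (rule fundamental_theorem_of_calculus_interior[OF x])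
    show "continuous_on {0..x} (Fprim \<omega> p q)"
      using Fprim_cont by (rule continuous_on_subset) auto
    show "(Fprim \<omega> p q has_vector_derivative nonlin \<omega> p q y) (at y)" if "y \<in> {0<..<x}" for y
      using Fprim_deriv[of y] that by (simp add: has_real_derivative_iff_has_vector_derivative)
  qed
  then show ?thesis unfolding Prim_def by (simp add: integral_unique Fprim_def)
qed

lemma Prim_0 [simp]: "Prim \<omega> p q 0 = 0"
  by (simp add: Prim_eq_Fprim Fprim_def)

lemma Prim_deriv:
  assumes s: "s > 0"
  shows "(Prim \<omega> p q has_real_derivative nonlin \<omega> p q s) (at s)"
  by (rule has_field_derivative_transform_within_open[OF Fprim_deriv[OF s], of "{0<..}"])
     (use s in \<open>auto simp: Prim_eq_Fprim\<close>)

lemma Prim_cont: "continuous_on {0..} (Prim \<omega> p q)"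
  using Fprim_cont by (rule continuous_on_cong[THEN iffD1, rotated 2]) (auto simp: Prim_eq_Fprim)


lemma fquot_top_pos: "fquot_top p q > 0"
  using p pq by (simp add: fquot_top_def)

lemma fquot_top_powr: "fquot_top p q powr (q - p) = (p - 1) / (q - 1)"
  using p pq by (simp add: fquot_top_def powr_powr)

lemma fquot_deriv:
  assumes s: "s > 0"
  shows "(fquot \<omega> p q has_real_derivative
           s powr (p - 2) * ((p - 1) - (q - 1) * s powr (q - p))) (at s)"
proof -
  have "(fquot \<omega> p q has_real_derivative
          0 + (p - 1) * s powr (p - 1 - 1) - (q - 1) * s powr (q - 1 - 1)) (at s)"
    unfolding fquot_def[abs_def]
    by (intro DERIV_diff DERIV_add DERIV_const has_real_derivative_powr) (use s in auto)
  moreover have "s powr (q - 1 - 1) = s powr (p - 2) * s powr (q - p)"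
    using powr_add[of s "p - 2" "q - p"] by simp
  ultimately show ?thesis by (simp add: algebra_simps)
qed

lemma fquot_cont: "a > 0 \<Longrightarrow> continuous_on {a..b} (fquot \<omega> p q)"
  by (intro continuous_at_imp_continuous_on ballI DERIV_isCont[OF fquot_deriv]) auto

lemma fquot_deriv_factor_sign:
  assumes s: "s > 0"
  shows "s < fquot_top p q \<longleftrightarrow> 0 < (p - 1) - (q - 1) * s powr (q - p)"
    and "fquot_top p q < s \<longleftrightarrow> (p - 1) - (q - 1) * s powr (q - p) < 0"
proof -
  have "s < fquot_top p q \<longleftrightarrow> s powr (q - p) < fquot_top p q powr (q - p)"
    using s pq fquot_top_pos powr_less_mono2[of "q - p"] powr_less_cancel2[of "q - p"]
    by (meson diff_gt_0_iff_gt less_imp_le)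
  moreover have "fquot_top p q < s \<longleftrightarrow> fquot_top p q powr (q - p) < s powr (q - p)"
    using s pq fquot_top_pos powr_less_mono2[of "q - p"] powr_less_cancel2[of "q - p"]
    by (meson diff_gt_0_iff_gt less_imp_le)
  ultimately show "s < fquot_top p q \<longleftrightarrow> 0 < (p - 1) - (q - 1) * s powr (q - p)"
    and "fquot_top p q < s \<longleftrightarrow> (p - 1) - (q - 1) * s powr (q - p) < 0"
    using p pq by (auto simp: fquot_top_powr field_simps)
qed

lemma fquot_strict_mono:
  assumes "0 < x" "x < y" "y \<le> fquot_top p q"
  shows "fquot \<omega> p q x < fquot \<omega> p q y"
proof (rule DERIV_pos_imp_increasing_open[OF assms(2)])
  show "continuous_on {x..y} (fquot \<omega> p q)" using fquot_cont assms by auto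
  fix t assume "x < t" "t < y"
  then have "0 < t" "t < fquot_top p q" using assms by auto
  then show "\<exists>d. (fquot \<omega> p q has_real_derivative d) (at t) \<and> 0 < d"
    using fquot_deriv[of t] fquot_deriv_factor_sign(1)[of t] by (auto intro: exI)
qed

lemma fquot_strict_antimono:
  assumes "fquot_top p q \<le> x" "x < y"
  shows "fquot \<omega> p q y < fquot \<omega> p q x"
proof (rule DERIV_neg_imp_decreasing_open[OF assms(2)])
  show "continuous_on {x..y} (fquot \<omega> p q)" using fquot_cont fquot_top_pos assms by auto
  fix t assume "x < t" "t < y"
  then have "0 < t" "fquot_top p q < t" using fquot_top_pos assms by auto
  then show "\<exists>d. (fquot \<omega> p q has_real_derivative d) (at t) \<and> d < 0"
    using fquot_deriv[of t] fquot_deriv_factor_sign(2)[of t] by (auto simp: mult_pos_neg)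
qed

lemma fquot_le_top: "s > 0 \<Longrightarrow> fquot \<omega> p q s \<le> fquot \<omega> p q (fquot_top p q)"
  using fquot_strict_mono[of s "fquot_top p q"] fquot_strict_antimono[of "fquot_top p q" s]
  by (cases "s < fquot_top p q"; cases "s = fquot_top p q") auto

text \<open>Since f(s) = s fquot(s), the primitive is monotone wherever fquot has a sign.\<close>

lemma Prim_mono_on:
  assumes "0 \<le> a" "a \<le> b" "\<And>t. a < t \<Longrightarrow> t < b \<Longrightarrow> 0 \<le> fquot \<omega> p q t"
  shows "Prim \<omega> p q a \<le> Prim \<omega> p q b"
proof (rule DERIV_nonneg_imp_increasing_open[OF assms(2)])
  show "continuous_on {a..b} (Prim \<omega> p q)"
    using Prim_cont by (rule continuous_on_subset) (use assms in auto)
  fix t assume t: "a < t" "t < b"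
  then show "\<exists>d. (Prim \<omega> p q has_real_derivative d) (at t) \<and> 0 \<le> d"
    using Prim_deriv[of t] nonlin_eq_fquot[of t] assms(1) assms(3)[OF t] by auto
qed

lemma Prim_antimono_on:
  assumes "0 \<le> a" "a \<le> b" "\<And>t. a < t \<Longrightarrow> t < b \<Longrightarrow> fquot \<omega> p q t \<le> 0"
  shows "Prim \<omega> p q b \<le> Prim \<omega> p q a"
proof (rule DERIV_nonpos_imp_decreasing_open[OF assms(2)])
  show "continuous_on {a..b} (Prim \<omega> p q)"
    using Prim_cont by (rule continuous_on_subset) (use assms in auto)
  fix t assume t: "a < t" "t < b"
  then show "\<exists>d. (Prim \<omega> p q has_real_derivative d) (at t) \<and> d \<le> 0"
    using Prim_deriv[of t] nonlin_eq_fquot[of t] assms(1) assms(3)[OF t]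
    by (auto simp: mult_nonneg_nonpos)
qed

lemma Prim_strict_antimono_on:
  assumes "0 \<le> a" "a < b" "\<And>t. a < t \<Longrightarrow> t < b \<Longrightarrow> fquot \<omega> p q t < 0"
  shows "Prim \<omega> p q b < Prim \<omega> p q a"
proof (rule DERIV_neg_imp_decreasing_open[OF assms(2)])
  show "continuous_on {a..b} (Prim \<omega> p q)"
    using Prim_cont by (rule continuous_on_subset) (use assms in auto)
  fix t assume t: "a < t" "t < b"
  then show "\<exists>d. (Prim \<omega> p q has_real_derivative d) (at t) \<and> d < 0"
    using Prim_deriv[of t] nonlin_eq_fquot[of t] assms(1) assms(3)[OF t]
    by (auto simp: mult_pos_neg)
qed


text \<open>Near zero the linear term dominates: f(s) \<le> -\<omega> s/2 and F(s) = O(s^2).\<close>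

lemma fquot_small:
  assumes om: "\<omega> > 0"
  shows "\<exists>\<sigma>>0. \<forall>s. 0 < s \<longrightarrow> s \<le> \<sigma> \<longrightarrow> fquot \<omega> p q s \<le> - \<omega> / 2"
proof (intro exI conjI allI impI)
  let ?\<sigma> = "(\<omega> / 2) powr (1 / (p - 1))"
  show "?\<sigma> > 0" using om by simp
  fix s assume s: "0 < s" "s \<le> ?\<sigma>"
  have "s powr (p - 1) \<le> ?\<sigma> powr (p - 1)" using s p by (intro powr_mono2) auto
  also have "\<dots> = \<omega> / 2" using p om by (simp add: powr_powr)
  finally show "fquot \<omega> p q s \<le> - \<omega> / 2"
    unfolding fquot_def using powr_ge_zero[of s "q - 1"] by linarith
qed

lemma Prim_quadratic_bound:
  assumes om: "\<omega> \<ge> 0" and s: "0 < s" "s \<le> 1"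
  shows "\<bar>Prim \<omega> p q s\<bar> \<le> (\<omega> / 2 + 2) * s\<^sup>2"
proof -
  have s2: "s powr 2 = s\<^sup>2" using s by (simp add: powr_realpow[of s 2, simplified])
  have "s powr (p + 1) / (p + 1) \<le> s powr (p + 1) / 1" "s powr (q + 1) / (q + 1) \<le> s powr (q + 1) / 1"
    using p pq by (intro divide_left_mono; simp)+
  moreover have "s powr (p + 1) \<le> s powr 2" "s powr (q + 1) \<le> s powr 2"
    using s p pq by (intro powr_mono'; simp)+
  moreover have "0 \<le> s powr (p + 1) / (p + 1)" "0 \<le> s powr (q + 1) / (q + 1)" "0 \<le> \<omega> * s\<^sup>2"
    using p pq om by auto
  ultimately show ?thesis
    using s s2 by (simp add: Prim_eq_Fprim Fprim_def abs_le_iff algebra_simps)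
qed

lemma gpoh_identity:
  assumes s: "s > 0"
  shows "2 * real n * Prim \<omega> p q s - (real n - 2) * s * nonlin \<omega> p q s = s\<^sup>2 * gpoh n \<omega> p q s"
proof -
  have e1: "s powr (p + 1) = s\<^sup>2 * s powr (p - 1)" "s powr (q + 1) = s\<^sup>2 * s powr (q - 1)"
    using powr_eq_square_times_powr_minus_2[OF s, of "p + 1"]
          powr_eq_square_times_powr_minus_2[OF s, of "q + 1"] by simp_all
  have e2: "s powr p = s * s powr (p - 1)" "s powr q = s * s powr (q - 1)"
    using powr_eq_times_powr_minus_1[OF s, of p] powr_eq_times_powr_minus_1[OF s, of q] .
  show ?thesis
    unfolding Prim_eq_Fprim[OF less_imp_le[OF s]] Fprim_def nonlin_def gpoh_def e1 e2
    by (rule gpoh_polynomial_identity)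
qed

lemma gpoh_deriv:
  assumes s: "s > 0"
  shows "(gpoh n \<omega> p q has_real_derivative s powr (p - 2) * gpoh_slope n p q s) (at s)"
proof -
  let ?a = "2 * real n / (p + 1) - (real n - 2)" and ?b = "(real n - 2) - 2 * real n / (q + 1)"
  have "(gpoh n \<omega> p q has_real_derivative
      0 + ?a * ((p - 1) * s powr (p - 1 - 1)) + ?b * ((q - 1) * s powr (q - 1 - 1))) (at s)"
    unfolding gpoh_def[abs_def]
    by (intro DERIV_diff DERIV_add DERIV_const DERIV_cmult has_real_derivative_powr) (use s in auto)
  moreover have "s powr (q - 1 - 1) = s powr (p - 2) * s powr (q - p)"
    using powr_add[of s "p - 2" "q - p"] by simp
  moreover have "?a * ((p - 1) * s powr (p - 2)) + ?b * ((q - 1) * (s powr (p - 2) * s powr (q - p)))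
      = s powr (p - 2) * gpoh_slope n p q s"
    unfolding gpoh_slope_def divide_inverse by algebra
  ultimately show ?thesis by simp
qed

lemma gpoh_small:
  assumes om: "\<omega> > 0"
  shows "\<exists>\<sigma>>0. \<forall>s. 0 < s \<longrightarrow> s \<le> \<sigma> \<longrightarrow> gpoh n \<omega> p q s < 0"
proof -
  define a where "a = 2 * real n / (p + 1) - (real n - 2)"
  define b where "b = (real n - 2) - 2 * real n / (q + 1)"
  define K where "K = \<bar>a\<bar> + \<bar>b\<bar> + 1"
  have K: "K > 0" unfolding K_def by simp
  define \<sigma> where "\<sigma> = min 1 ((\<omega> / K) powr (1 / (p - 1)))"
  show ?thesis
  proof (intro exI conjI allI impI)
    show "\<sigma> > 0" unfolding \<sigma>_def using om K by simp
    fix s assume s: "0 < s" "s \<le> \<sigma>"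
    have "s powr (p - 1) \<le> ((\<omega> / K) powr (1 / (p - 1))) powr (p - 1)"
      using s p unfolding \<sigma>_def by (intro powr_mono2) auto
    also have "\<dots> = \<omega> / K" using p om K by (simp add: powr_powr)
    finally have "K * s powr (p - 1) \<le> \<omega>" using K by (simp add: field_simps)
    moreover have "s powr (q - 1) \<le> s powr (p - 1)"
      using s pq unfolding \<sigma>_def by (intro powr_mono') auto
    moreover have "a * s powr (p - 1) \<le> \<bar>a\<bar> * s powr (p - 1)"
      "b * s powr (q - 1) \<le> \<bar>b\<bar> * s powr (q - 1)"
      by (intro mult_right_mono; simp)+
    moreover have "\<bar>b\<bar> * s powr (q - 1) \<le> \<bar>b\<bar> * s powr (p - 1)"
      using calculation(2) by (intro mult_left_mono) auto
    moreover have "K * s powr (p - 1) = \<bar>a\<bar> * s powr (p - 1) + \<bar>b\<bar> * s powr (p - 1) + s powr (p - 1)"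
      unfolding K_def by (simp add: algebra_simps)
    moreover have "s powr (p - 1) > 0" using s by simp
    ultimately show "gpoh n \<omega> p q s < 0"
      unfolding gpoh_def a_def[symmetric] b_def[symmetric] using om by linarith
  qed
qed

(* gpoh_slope is affine in s^(q-p), hence monotone one way or the other. *)
lemma gpoh_slope_monotone:
  "(\<forall>s t. 0 < s \<longrightarrow> s \<le> t \<longrightarrow> gpoh_slope n p q s \<le> gpoh_slope n p q t)
   \<or> (\<forall>s t. 0 < s \<longrightarrow> s \<le> t \<longrightarrow> gpoh_slope n p q t \<le> gpoh_slope n p q s)"
proof -
  let ?b = "((real n - 2) - 2 * real n / (q + 1)) * (q - 1)"
  have st: "s powr (q - p) \<le> t powr (q - p)" if "0 < s" "s \<le> t" for s t
    using that pq by (intro powr_mono2) auto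
  show ?thesis
  proof (cases "?b \<ge> 0")
    case True
    then show ?thesis by (auto simp: gpoh_slope_def intro!: disjI1 mult_left_mono st)
  next
    case False
    then show ?thesis by (auto simp: gpoh_slope_def intro!: disjI2 mult_left_mono_neg st)
  qed
qed

lemma gpoh_change_slope:
  assumes "0 < a" "a < b"
  shows "gpoh n \<omega> p q a < gpoh n \<omega> p q b \<Longrightarrow> \<exists>t. a < t \<and> t < b \<and> gpoh_slope n p q t > 0"
    and "gpoh n \<omega> p q b < gpoh n \<omega> p q a \<Longrightarrow> \<exists>t. a < t \<and> t < b \<and> gpoh_slope n p q t < 0"
proof -
  obtain t where t: "a < t" "t < b"
    "gpoh n \<omega> p q b - gpoh n \<omega> p q a = (b - a) * (t powr (p - 2) * gpoh_slope n p q t)"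
    using MVT2[OF assms(2), of "gpoh n \<omega> p q" "\<lambda>t. t powr (p - 2) * gpoh_slope n p q t"]
      gpoh_deriv assms by force
  have pos: "0 < (b - a) * t powr (p - 2)" "t \<noteq> 0" "b \<noteq> a" using t assms by auto
  have "gpoh_slope n p q t = (gpoh n \<omega> p q b - gpoh n \<omega> p q a) / ((b - a) * t powr (p - 2))"
    using t pos assms by (simp add: mult.assoc)
  then show "gpoh n \<omega> p q a < gpoh n \<omega> p q b \<Longrightarrow> \<exists>t. a < t \<and> t < b \<and> gpoh_slope n p q t > 0"
    and "gpoh n \<omega> p q b < gpoh n \<omega> p q a \<Longrightarrow> \<exists>t. a < t \<and> t < b \<and> gpoh_slope n p q t < 0"
    using t(1,2) pos by (auto intro!: exI[of _ t] divide_pos_pos divide_neg_pos)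
qed

text \<open>Single crossing: below a point where g > 0, the set where g \<le> 0 is an initial
  interval. This is what makes P first increase and then decrease.\<close>

lemma gpoh_single_crossing:
  assumes om: "\<omega> > 0" and "0 < y" "y \<le> x" "x \<le> z" "gpoh n \<omega> p q x \<le> 0" "0 < gpoh n \<omega> p q z"
  shows "gpoh n \<omega> p q y \<le> 0"
proof (rule ccontr)
  assume "\<not> ?thesis"
  then have gy: "gpoh n \<omega> p q y > 0" by simp
  then have "y < x" "x < z" using assms by (auto simp: order.order_iff_strict)
  obtain t1 where t1: "y < t1" "t1 < x" "gpoh_slope n p q t1 < 0"
    using gpoh_change_slope(2)[of y x n] \<open>y < x\<close> assms gy by auto
  obtain t2 where t2: "x < t2" "t2 < z" "gpoh_slope n p q t2 > 0"
    using gpoh_change_slope(1)[of x z n] \<open>x < z\<close> \<open>y < x\<close> assms gy by auto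
  obtain \<sigma> where \<sigma>: "\<sigma> > 0" "\<And>s. 0 < s \<Longrightarrow> s \<le> \<sigma> \<Longrightarrow> gpoh n \<omega> p q s < 0"
    using gpoh_small[OF om] by auto
  define e where "e = min \<sigma> (y / 2)"
  have "0 < e" "e < y" "gpoh n \<omega> p q e < 0" using \<sigma> assms unfolding e_def by auto
  then obtain t0 where t0: "e < t0" "t0 < y" "gpoh_slope n p q t0 > 0"
    using gpoh_change_slope(1)[of e y n] gy by auto
  from gpoh_slope_monotone[of n] show False
  proof
    assume "\<forall>s t. 0 < s \<longrightarrow> s \<le> t \<longrightarrow> gpoh_slope n p q s \<le> gpoh_slope n p q t"
    then have "gpoh_slope n p q t0 \<le> gpoh_slope n p q t1" using t0 t1 \<open>0 < e\<close> by auto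
    then show False using t0 t1 by linarith
  next
    assume "\<forall>s t. 0 < s \<longrightarrow> s \<le> t \<longrightarrow> gpoh_slope n p q t \<le> gpoh_slope n p q s"
    then have "gpoh_slope n p q t2 \<le> gpoh_slope n p q t1" using t1 t2 \<open>0 < y\<close> by auto
    then show False using t1 t2 by linarith
  qed
qed

text \<open>The hypothesis \<omega> < omega_pq p q enters exactly here: it makes F positive somewhere.\<close>

lemma Prim_positive_somewhere:
  assumes omb: "\<omega> < omega_pq p q"
  shows "\<exists>s>0. Prim \<omega> p q s > 0"
proof -
  define X where "X = (p - 1) * (q + 1) / ((p + 1) * (q - 1))"
  define s where "s = X powr (1 / (q - p))"
  define Y where "Y = X powr ((p - 1) / (q - p))"
  have X: "X > 0" unfolding X_def using p pq by simp
  have s: "s > 0" and Y: "Y > 0" unfolding s_def Y_def using X by simp_all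
  have e1: "s powr (p - 1) = Y" unfolding s_def Y_def using X by (simp add: powr_powr)
  have "s powr (q - p) = X" unfolding s_def using X pq by (simp add: powr_powr)
  then have e2: "s powr (q - 1) = Y * X" using powr_add[of s "p - 1" "q - p"] e1 by simp
  have "Prim \<omega> p q s = s\<^sup>2 * (- \<omega> / 2 + Y / (p + 1) - Y * X / (q + 1))"
    using powr_eq_square_times_powr_minus_2[OF s, of "p + 1"]
          powr_eq_square_times_powr_minus_2[OF s, of "q + 1"] e1 e2 s
    by (simp add: Prim_eq_Fprim Fprim_def algebra_simps)
  also have "- \<omega> / 2 + Y / (p + 1) - Y * X / (q + 1) = (omega_pq p q - \<omega>) / 2"
  proof -
    have om_eq: "omega_pq p q = 2 * (q - p) / ((p + 1) * (q - 1)) * Y"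
      unfolding omega_pq_def Y_def X_def by simp
    have "X / (q + 1) = (p - 1) / ((p + 1) * (q - 1))"
      using p pq unfolding X_def by simp
    then have x_eq: "Y * X / (q + 1) = Y * (p - 1) / ((p + 1) * (q - 1))"
      by (metis times_divide_eq_right)
    have "q - 1 \<noteq> 0" using pq p by simp
    then have "Y / (p + 1) = Y * (q - 1) / ((p + 1) * (q - 1))" by simp
    then have "Y / (p + 1) - Y * (p - 1) / ((p + 1) * (q - 1)) = Y * (q - p) / ((p + 1) * (q - 1))"
      by (simp add: diff_divide_distrib[symmetric] algebra_simps)
    moreover have "2 * (q - p) / ((p + 1) * (q - 1)) * Y = 2 * (Y * (q - p) / ((p + 1) * (q - 1)))"
      by simp
    ultimately show ?thesis unfolding om_eq x_eq by argo
  qed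
  finally have "Prim \<omega> p q s = s\<^sup>2 * ((omega_pq p q - \<omega>) / 2)" .
  moreover have "s\<^sup>2 * ((omega_pq p q - \<omega>) / 2) > 0" using s omb by simp
  ultimately show ?thesis using s by auto
qed


text \<open>The values of u at an interior minimum and a later maximum would have to satisfy
  this impossible sign pattern; this rules out oscillation of u.\<close>

lemma no_min_below_max:
  assumes "0 < a" "a < b" "fquot \<omega> p q a \<le> 0" "Prim \<omega> p q a \<ge> 0" "fquot \<omega> p q b \<ge> 0"
  shows False
proof (cases "a \<le> fquot_top p q")
  case True
  have "Prim \<omega> p q a < Prim \<omega> p q 0"
    using Prim_strict_antimono_on[of 0 a] fquot_strict_mono[of _ a] True assms by force
  then show False using assms by simp
next
  case False
  then show False using fquot_strict_antimono[of a b] assms by simp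
qed

text \<open>Let beta be the largest zero of f. Under \<omega> < omega_pq p q it exists, lies beyond
  fquot_top and F(beta) is the maximum of F, hence positive.\<close>

lemma fquot_top_value_pos:
  assumes omb: "\<omega> < omega_pq p q"
  shows "fquot \<omega> p q (fquot_top p q) > 0"
proof (rule ccontr)
  assume "\<not> ?thesis"
  then have "\<And>t. 0 < t \<Longrightarrow> fquot \<omega> p q t \<le> 0" using fquot_le_top by force
  moreover obtain s where "s > 0" "Prim \<omega> p q s > 0" using Prim_positive_somewhere[OF omb] by auto
  ultimately show False using Prim_antimono_on[of 0 s] by auto
qed

lemma fquot_zero_beyond_top:
  assumes om: "\<omega> > 0" and omb: "\<omega> < omega_pq p q"
  shows "\<exists>\<beta>. fquot_top p q < \<beta> \<and> fquot \<omega> p q \<beta> = 0"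
proof -
  define T where "T = fquot_top p q + 1"
  have T: "T \<ge> 1" unfolding T_def using fquot_top_pos by simp
  have "T powr (p - 1) \<le> T powr (q - 1)" using T pq by (intro powr_mono) auto
  then have "fquot \<omega> p q T \<le> 0" unfolding fquot_def using om by simp
  then obtain \<beta> where \<beta>: "fquot_top p q \<le> \<beta>" "\<beta> \<le> T" "fquot \<omega> p q \<beta> = 0"
    using IVT2'[of "fquot \<omega> p q" T 0 "fquot_top p q"] fquot_top_value_pos[OF omb]
      fquot_cont[OF fquot_top_pos] T_def by force
  then show ?thesis using fquot_top_value_pos[OF omb] by (intro exI[of _ \<beta>]) (auto simp: order.order_iff_strict)
qed

context
  fixes \<beta> :: real
  assumes \<beta>_top: "fquot_top p q < \<beta>" and \<beta>_zero: "fquot \<omega> p q \<beta> = 0"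
begin

lemma fquot_neg_beyond: "\<beta> < t \<Longrightarrow> fquot \<omega> p q t < 0"
  using fquot_strict_antimono[of \<beta> t] \<beta>_top \<beta>_zero by simp

lemma fquot_nonneg_imp_le: "0 < s \<Longrightarrow> 0 \<le> fquot \<omega> p q s \<Longrightarrow> s \<le> \<beta>"
  using fquot_neg_beyond[of s] by linarith

lemma Prim_below_zero_or_beta:
  assumes s: "s > 0"
  shows "Prim \<omega> p q s \<le> 0 \<or> Prim \<omega> p q s \<le> Prim \<omega> p q \<beta>"
proof (cases "\<beta> \<le> s")
  case True
  then show ?thesis using Prim_antimono_on[of \<beta> s] fquot_neg_beyond \<beta>_top fquot_top_pos by force
next
  case False
  show ?thesis
  proof (cases "0 \<le> fquot \<omega> p q s")
    case True
    have "0 \<le> fquot \<omega> p q t" if "s < t" "t < \<beta>" for t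
    proof (cases "t \<le> fquot_top p q")
      case True
      then show ?thesis using fquot_strict_mono[of s t] \<open>0 \<le> fquot \<omega> p q s\<close> s that by auto
    next
      case False
      then show ?thesis using fquot_strict_antimono[of t \<beta>] \<beta>_zero that by auto
    qed
    then show ?thesis using Prim_mono_on[of s \<beta>] s False by auto
  next
    case negative: False
    have "s < fquot_top p q"
      using fquot_strict_antimono[of s \<beta>] negative False \<beta>_zero by force
    then have "fquot \<omega> p q t \<le> 0" if "0 < t" "t < s" for t
      using fquot_strict_mono[of t s] negative that by auto
    then show ?thesis using Prim_antimono_on[of 0 s] s by auto
  qed
qed

lemma Prim_beta_pos:
  assumes omb: "\<omega> < omega_pq p q"
  shows "Prim \<omega> p q \<beta> > 0"
  using Prim_positive_somewhere[OF omb] Prim_below_zero_or_beta by force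

lemma gpoh_beta_pos:
  assumes omb: "\<omega> < omega_pq p q" and n: "n \<ge> 1"
  shows "gpoh n \<omega> p q \<beta> > 0"
proof -
  have \<beta>: "\<beta> > 0" using \<beta>_top fquot_top_pos by simp
  then have "\<beta>\<^sup>2 * gpoh n \<omega> p q \<beta> = 2 * real n * Prim \<omega> p q \<beta>"
    using gpoh_identity[OF \<beta>, of n] nonlin_eq_fquot[OF \<beta>] \<beta>_zero by simp
  moreover have "2 * real n * Prim \<omega> p q \<beta> > 0" using Prim_beta_pos[OF omb] n by simp
  ultimately have "\<beta>\<^sup>2 * gpoh n \<omega> p q \<beta> > 0" by simp
  then show ?thesis using \<beta> by (simp add: zero_less_mult_iff)
qed

end

end


lemma pos_if_strict_mono_from_zero:
  fixes W :: "real \<Rightarrow> real"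
  assumes mono: "\<And>x y. 0 < x \<Longrightarrow> x < y \<Longrightarrow> y < \<delta> \<Longrightarrow> W x < W y"
    and lim0: "(W \<longlongrightarrow> 0) (at_right 0)" and y: "0 < y" "y < \<delta>"
  shows "W y > 0"
proof -
  have "0 \<le> W (y / 2)"
  proof (rule tendsto_upperbound[OF lim0])
    show "\<forall>\<^sub>F x in at_right 0. W x \<le> W (y / 2)"
      unfolding eventually_at_right_field
      by (rule exI[of _ "y / 2"]) (use y mono in \<open>auto intro: less_imp_le\<close>)
  qed simp
  also have "W (y / 2) < W y" using mono[of "y / 2" y] y by simp
  finally show ?thesis .
qed

lemma power_times_exp_tendsto_0:
  assumes c: "(c::real) > 0"
  shows "((\<lambda>r. r ^ n * exp (- (c * r))) \<longlongrightarrow> 0) at_top"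
proof -
  have "filterlim (\<lambda>r. c * r) at_top at_top"
    by (rule filterlim_tendsto_pos_mult_at_top[OF tendsto_const c filterlim_ident])
  then have "((\<lambda>r. (c * r) ^ n / exp (c * r)) \<longlongrightarrow> 0) at_top"
    by (rule filterlim_compose[OF tendsto_power_div_exp_0])
  then have "((\<lambda>r. (1 / c ^ n) * ((c * r) ^ n / exp (c * r))) \<longlongrightarrow> (1 / c ^ n) * 0) at_top"
    by (intro tendsto_intros)
  moreover have "(\<lambda>r. r ^ n * exp (- (c * r))) = (\<lambda>r. (1 / c ^ n) * ((c * r) ^ n / exp (c * r)))"
    using c by (intro ext) (simp add: power_mult_distrib exp_minus field_simps)
  ultimately show ?thesis by simp
qed

context
  fixes v v' v'' :: "real \<Rightarrow> real" and c R :: real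
  assumes c: "c > 0"
    and v_pos: "\<And>r. r \<ge> R \<Longrightarrow> v r > 0"
    and v'_nonpos: "\<And>r. r \<ge> R \<Longrightarrow> v' r \<le> 0"
    and v_deriv: "\<And>r. r \<ge> R \<Longrightarrow> (v has_real_derivative v' r) (at r)"
    and v'_deriv: "\<And>r. r \<ge> R \<Longrightarrow> (v' has_real_derivative v'' r) (at r)"
    and v_convex: "\<And>r. r \<ge> R \<Longrightarrow> v'' r \<ge> c\<^sup>2 * v r"
    and v_lim: "(v \<longlongrightarrow> 0) at_top"
begin

(* exp(-c r)(v' + c v) is nondecreasing; as v' + c v cannot stay above a positive level
   (v \<rightarrow> 0, v' \<le> 0), it is nonpositive. *)
lemma decay_combination_nonpos:
  assumes r: "r \<ge> R"
  shows "v' r + c * v r \<le> 0"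
proof (rule ccontr)
  define h where "h t = exp (- (c * t)) * (v' t + c * v t)" for t
  assume "\<not> ?thesis"
  then have v0: "v' r + c * v r > 0" by simp
  have h_mono: "h r \<le> h s" if "r \<le> s" for s
  proof (rule DERIV_nonneg_imp_nondecreasing[OF that])
    fix t assume "r \<le> t" "t \<le> s"
    then have t: "t \<ge> R" using r by simp
    have "(h has_real_derivative exp (- (c * t)) * (v'' t - c\<^sup>2 * v t)) (at t)"
      unfolding h_def
      by (auto intro!: derivative_eq_intros v_deriv[OF t] v'_deriv[OF t]
               simp: algebra_simps power2_eq_square)
    then show "\<exists>d. (h has_real_derivative d) (at t) \<and> 0 \<le> d"
      using v_convex[OF t] by auto
  qed
  have "eventually (\<lambda>s. c * v s < v' r + c * v r) at_top"
    using tendsto_mult[OF tendsto_const v_lim, of c] v0 by (intro order_tendstoD(2)) auto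
  then obtain S where S: "\<And>s. s \<ge> S \<Longrightarrow> c * v s < v' r + c * v r"
    unfolding eventually_at_top_linorder by auto
  define s where "s = max S r"
  have "exp (- (c * s)) * (v' r + c * v r) \<le> exp (- (c * r)) * (v' r + c * v r)"
    using c v0 unfolding s_def by (intro mult_right_mono) auto
  also have "\<dots> \<le> exp (- (c * s)) * (v' s + c * v s)"
    using h_mono[of s] unfolding h_def s_def by simp
  finally have "v' r + c * v r \<le> v' s + c * v s" by simp
  moreover have "v' s + c * v s < v' r + c * v r"
    using S[of s] v'_nonpos[of s] r unfolding s_def by fastforce
  ultimately show False by simp
qed

lemma decay_value: "v r \<le> (v R * exp (c * R)) * exp (- (c * r))" if r: "r \<ge> R" for r
proof -
  have "exp (c * r) * v r \<le> exp (c * R) * v R"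
  proof (rule DERIV_nonpos_imp_nonincreasing[OF r, of "\<lambda>t. exp (c * t) * v t"])
    fix t assume "R \<le> t" "t \<le> r"
    then have t: "t \<ge> R" by simp
    have "((\<lambda>t. exp (c * t) * v t) has_real_derivative exp (c * t) * (v' t + c * v t)) (at t)"
      by (auto intro!: derivative_eq_intros v_deriv[OF t] simp: algebra_simps)
    then show "\<exists>d. ((\<lambda>t. exp (c * t) * v t) has_real_derivative d) (at t) \<and> d \<le> 0"
      using decay_combination_nonpos[OF t] by (auto simp: mult_nonneg_nonpos)
  qed
  then show ?thesis by (simp add: exp_minus field_simps)
qed

lemma decay_slope: "\<bar>v' r\<bar> \<le> (v R * exp (c * R) * exp c) * exp (- (c * r))" if r: "r \<ge> R + 1" for r
proof -
  obtain \<xi> where \<xi>: "r - 1 < \<xi>" "\<xi> < r" "v r - v (r - 1) = (r - (r - 1)) * v' \<xi>"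
    using MVT2[of "r - 1" r v v'] v_deriv r by force
  have "v' \<xi> \<le> v' r"
  proof (rule DERIV_nonneg_imp_nondecreasing[of \<xi> r v'])
    fix x assume "\<xi> \<le> x" "x \<le> r"
    then have x: "x \<ge> R" using \<xi> r by simp
    show "\<exists>d. (v' has_real_derivative d) (at x) \<and> 0 \<le> d"
      using v'_deriv[OF x] v_convex[OF x] v_pos[OF x]
      by (intro exI[of _ "v'' x"]) (auto intro: order_trans[rotated])
  qed (use \<xi> in simp)
  then have "- v' r \<le> v (r - 1)" using \<xi> v_pos[of r] r by simp
  also have "\<dots> \<le> (v R * exp (c * R)) * exp (- (c * (r - 1)))" using decay_value[of "r - 1"] r by simp
  also have "\<dots> = (v R * exp (c * R) * exp c) * exp (- (c * r))"
    by (simp add: algebra_simps exp_add[symmetric])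
  finally show ?thesis using v'_nonpos[of r] r by simp
qed

end


(* The derivative of r^(n-1), written with the factor (n-1)/r of the radial equation. *)
lemma power_pred_deriv_factor:
  assumes n: "n \<ge> 1" and r: "(r::real) > 0"
  shows "real (n - 1) * r ^ (n - 1 - 1) = (real n - 1) * r ^ (n - 1) / r"
proof (cases "n = 1")
  case False
  then have "n - 1 = Suc (n - 1 - 1)" using n by simp
  then have "r ^ (n - 1) = r * r ^ (n - 1 - 1)" by (metis power_Suc)
  then show ?thesis using n r by (simp add: of_nat_diff)
qed simp

locale ground_state =
  fixes n :: nat and p q \<omega> :: real and u u' u'' :: "real \<Rightarrow> real"
  assumes n: "n \<ge> 1"
    and p: "1 < p" and pq: "p < q"
    and om: "0 < \<omega>" and omb: "\<omega> < omega_pq p q"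
    and pos: "\<And>r. r \<ge> 0 \<Longrightarrow> u r > 0"
    and d1: "\<And>r. r \<ge> 0 \<Longrightarrow> (u has_real_derivative u' r) (at r within {0..})"
    and d2: "\<And>r. r > 0 \<Longrightarrow> (u' has_real_derivative u'' r) (at r)"
    and ode: "\<And>r. r > 0 \<Longrightarrow> u'' r + (real n - 1) / r * u' r + nonlin \<omega> p q (u r) = 0"
    and init: "u' 0 = 0"
    and lim: "(u \<longlongrightarrow> 0) at_top"
begin

abbreviation "f \<equiv> nonlin \<omega> p q"
abbreviation "F \<equiv> Prim \<omega> p q"

lemma u_deriv:
  assumes r: "r > 0"
  shows "(u has_real_derivative u' r) (at r)"
proof -
  have "(u has_real_derivative u' r) (at r within {0<..})"
    by (rule DERIV_subset[OF d1]) (use r in auto)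
  then show ?thesis using at_within_open[of r "{0<..}"] r by simp
qed

lemma u_cont: "continuous_on {0..} u"
  unfolding continuous_on_eq_continuous_within by (auto intro!: DERIV_continuous[OF d1])

lemma u''_eq: "r > 0 \<Longrightarrow> u'' r = - ((real n - 1) / r * u' r) - f (u r)"
  using ode[of r] by linarith

lemma f_u_cont: "continuous_on {0..} (\<lambda>s. f (u s))"
proof (rule continuous_on_compose2[OF _ u_cont])
  show "continuous_on {0<..} f" unfolding nonlin_def[abs_def] by (intro continuous_intros) auto
qed (auto intro: pos)

lemma F_u_deriv: "r > 0 \<Longrightarrow> ((\<lambda>s. F (u s)) has_real_derivative f (u r) * u' r) (at r)"
  by (rule DERIV_chain2[OF Prim_deriv[OF p pq pos] u_deriv]) auto

lemma F_u_cont: "continuous_on {0..} (\<lambda>s. F (u s))"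
  by (rule continuous_on_compose2[OF Prim_cont[OF p pq] u_cont]) (auto intro: less_imp_le pos)

lemma u_strict_antimono_on:
  assumes "0 \<le> a" "a < b" "\<And>x. a < x \<Longrightarrow> x < b \<Longrightarrow> u' x < 0"
  shows "u b < u a"
proof (rule DERIV_neg_imp_decreasing_open[OF assms(2)])
  show "continuous_on {a..b} u" using u_cont by (rule continuous_on_subset) (use assms in auto)
  fix x assume "a < x" "x < b"
  then show "\<exists>y. (u has_real_derivative y) (at x) \<and> y < 0" using u_deriv[of x] assms by force
qed

lemma u_strict_mono_on:
  assumes "0 \<le> a" "a < b" "\<And>x. a < x \<Longrightarrow> x < b \<Longrightarrow> u' x > 0"
  shows "u a < u b"
proof (rule DERIV_pos_imp_increasing_open[OF assms(2)])
  show "continuous_on {a..b} u" using u_cont by (rule continuous_on_subset) (use assms in auto)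
  fix x assume "a < x" "x < b"
  then show "\<exists>y. (u has_real_derivative y) (at x) \<and> y > 0" using u_deriv[of x] assms by force
qed

lemma flux_deriv:
  assumes r: "r > 0"
  shows "((\<lambda>s. s ^ (n - 1) * u' s) has_real_derivative - (r ^ (n - 1) * f (u r))) (at r)"
proof -
  have "((\<lambda>s. s ^ (n - 1) * u' s) has_real_derivative
      real (n - 1) * r ^ (n - 1 - 1) * u' r + r ^ (n - 1) * u'' r) (at r)"
    by (auto intro!: derivative_eq_intros d2 r)
  moreover note power_pred_deriv_factor[OF n r]
  then have "real (n - 1) * r ^ (n - 1 - 1) * u' r + r ^ (n - 1) * u'' r = - (r ^ (n - 1) * f (u r))"
    unfolding u''_eq[OF r] using r by (simp only:) (simp add: field_simps)
  ultimately show ?thesis by simp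
qed

lemma u'_small_somewhere_near_0:
  assumes "\<eta> > 0" "r > 0"
  shows "\<exists>e. 0 < e \<and> e < r \<and> \<bar>u' e\<bar> < \<eta>"
proof -
  have "((\<lambda>y. (u y - u 0) / (y - 0)) \<longlongrightarrow> 0) (at 0 within {0..})"
    using d1[of 0] init by (simp add: has_field_derivative_iff)
  then have "eventually (\<lambda>y. \<bar>(u y - u 0) / (y - 0)\<bar> < \<eta>) (at 0 within {0..})"
    using assms(1) by (auto dest!: tendstoD simp: dist_real_def)
  then obtain d where d: "d > 0"
    "\<And>y. y \<in> {0..} \<Longrightarrow> y \<noteq> 0 \<Longrightarrow> dist y 0 < d \<Longrightarrow> \<bar>(u y - u 0) / (y - 0)\<bar> < \<eta>"
    unfolding eventually_at by auto
  define y where "y = min r d / 2"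
  have y: "0 < y" "y < r" "y < d" unfolding y_def using d assms by auto
  have "\<exists>l z. 0 < z \<and> z < y \<and> (u has_real_derivative l) (at z) \<and> u y - u 0 = (y - 0) * l"
  proof (rule MVT[OF y(1)])
    show "continuous_on {0..y} u" using u_cont by (rule continuous_on_subset) auto
    show "\<And>x. 0 < x \<Longrightarrow> x < y \<Longrightarrow> u differentiable (at x)"
      using u_deriv real_differentiable_def by blast
  qed
  then obtain l z where z: "0 < z" "z < y" "(u has_real_derivative l) (at z)" "u y - u 0 = (y - 0) * l"
    by blast
  have "l = u' z" using DERIV_unique[OF z(3) u_deriv[OF z(1)]] .
  then have "\<bar>u' z\<bar> < \<eta>" using d(2)[of y] y z by (auto simp: dist_real_def)
  then show ?thesis using z y by (intro exI[of _ z]) auto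
qed

lemma u'_linear_bound_0: "\<exists>B>0. \<forall>r. 0 < r \<longrightarrow> r \<le> 1 \<longrightarrow> \<bar>u' r\<bar> \<le> B * r"
proof -
  have "bounded ((\<lambda>s. f (u s)) ` {0..1})"
    by (intro compact_imp_bounded compact_continuous_image continuous_on_subset[OF f_u_cont]) auto
  then obtain B where B: "B > 0" "\<And>s. s \<in> {0..1} \<Longrightarrow> \<bar>f (u s)\<bar> \<le> B"
    unfolding bounded_pos by auto
  have flux_bound: "\<bar>r ^ (n - 1) * u' r\<bar> \<le> B * r ^ n" if r: "0 < r" "r \<le> 1" for r
  proof (rule field_le_epsilon)
    fix \<eta> :: real assume \<eta>: "\<eta> > 0"
    obtain e where e: "0 < e" "e < r" "\<bar>u' e\<bar> < \<eta>" using u'_small_somewhere_near_0[OF \<eta> r(1)] by auto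
    obtain \<xi> where \<xi>: "e < \<xi>" "\<xi> < r"
      "r ^ (n - 1) * u' r - e ^ (n - 1) * u' e = (r - e) * (- (\<xi> ^ (n - 1) * f (u \<xi>)))"
      using MVT2[OF e(2), of "\<lambda>s. s ^ (n - 1) * u' s" "\<lambda>s. - (s ^ (n - 1) * f (u s))"]
        flux_deriv e by force
    have "\<bar>\<xi> ^ (n - 1) * f (u \<xi>)\<bar> = \<xi> ^ (n - 1) * \<bar>f (u \<xi>)\<bar>" using \<xi> e by (simp add: abs_mult)
    also have "\<dots> \<le> r ^ (n - 1) * B"
      using \<xi> e r B(2)[of \<xi>] by (intro mult_mono power_mono) auto
    finally have "\<bar>\<xi> ^ (n - 1) * f (u \<xi>)\<bar> \<le> r ^ (n - 1) * B" .
    then have "\<bar>r ^ (n - 1) * u' r - e ^ (n - 1) * u' e\<bar> \<le> (r - e) * (r ^ (n - 1) * B)"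
      using \<xi> e by (simp add: abs_mult mult_left_mono)
    also have "\<dots> \<le> r * (r ^ (n - 1) * B)" using e B r by (intro mult_right_mono) auto
    also have "\<dots> = B * r ^ n" using n by (cases n) auto
    finally have "\<bar>r ^ (n - 1) * u' r - e ^ (n - 1) * u' e\<bar> \<le> B * r ^ n" .
    moreover have "\<bar>e ^ (n - 1) * u' e\<bar> \<le> 1 * \<eta>"
      unfolding abs_mult using e r \<eta> by (intro mult_mono) (auto intro: power_le_one)
    ultimately show "\<bar>r ^ (n - 1) * u' r\<bar> \<le> B * r ^ n + \<eta>" by linarith
  qed
  show ?thesis
  proof (intro exI[of _ B] conjI allI impI)
    fix r :: real assume r: "0 < r" "r \<le> 1"
    have "r ^ (n - 1) * \<bar>u' r\<bar> \<le> r ^ (n - 1) * (B * r)"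
      using flux_bound[OF r] r n by (cases n) (auto simp: abs_mult)
    then show "\<bar>u' r\<bar> \<le> B * r" using r by (simp add: mult_le_cancel_left)
  qed (use B in auto)
qed

lemma u'_tendsto_0: "(u' \<longlongrightarrow> 0) (at_right 0)"
proof -
  obtain B where B: "\<And>r. 0 < r \<Longrightarrow> r \<le> 1 \<Longrightarrow> \<bar>u' r\<bar> \<le> B * r"
    using u'_linear_bound_0 by auto
  have "eventually (\<lambda>r. norm (u' r) \<le> B * r) (at_right (0::real))"
    unfolding eventually_at_right_field using B by (intro exI[of _ 1]) simp
  moreover have "((\<lambda>r. B * r) \<longlongrightarrow> 0) (at_right (0::real))"
    using tendsto_mult_right_zero[OF tendsto_ident_at[of 0 "{0<..}"], of B] by simp
  ultimately show ?thesis by (rule Lim_null_comparison)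
qed

lemma u_tendsto_u0: "(u \<longlongrightarrow> u 0) (at_right 0)"
proof -
  have "(u \<longlongrightarrow> u 0) (at 0 within {0..})" using u_cont unfolding continuous_on_def by simp
  then show ?thesis by (rule tendsto_within_subset) auto
qed


text \<open>The energy E = u'^2/2 + F(u) is nonincreasing (the damping term has a sign) and tends
  to 0, hence is nonnegative; letting r \<rightarrow> 0 gives F(u(0)) \<ge> 0.\<close>

definition energy :: "real \<Rightarrow> real" where
  "energy r = (u' r)\<^sup>2 / 2 + F (u r)"

lemma energy_deriv:
  assumes r: "r > 0"
  shows "(energy has_real_derivative - ((real n - 1) / r * (u' r)\<^sup>2)) (at r)"
proof -
  have "(energy has_real_derivative u' r * u'' r + f (u r) * u' r) (at r)"
    unfolding energy_def[abs_def]
    by (auto intro!: derivative_eq_intros d2[OF r] F_u_deriv[OF r] simp: power2_eq_square)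
  then show ?thesis unfolding u''_eq[OF r] by (simp add: algebra_simps power2_eq_square)
qed

lemma energy_antimono:
  assumes "0 < r" "r \<le> r'"
  shows "energy r' \<le> energy r"
proof (rule DERIV_nonpos_imp_nonincreasing[OF assms(2)])
  fix x assume "r \<le> x" "x \<le> r'"
  then have x: "x > 0" using assms by simp
  then have "0 \<le> (real n - 1) / x * (u' x)\<^sup>2" using n by simp
  then show "\<exists>d. (energy has_real_derivative d) (at x) \<and> d \<le> 0"
    using energy_deriv[OF x] by auto
qed

lemma F_u_tendsto_at_top: "((\<lambda>s. F (u s)) \<longlongrightarrow> 0) at_top"
proof -
  have "((\<lambda>s. F (u s)) \<longlongrightarrow> F 0) at_top"
  proof (rule continuous_on_tendsto_compose[OF Prim_cont[OF p pq] lim])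
    show "\<forall>\<^sub>F x in at_top. u x \<in> {0..}"
      using eventually_ge_at_top[of 0] by eventually_elim (use pos in \<open>auto intro: less_imp_le\<close>)
  qed auto
  then show ?thesis using Prim_0[OF p pq] by simp
qed

lemma energy_nonneg:
  assumes r: "r > 0"
  shows "energy r \<ge> 0"
proof (rule ccontr)
  assume "\<not> ?thesis"
  then have "eventually (\<lambda>s. F (u s) > energy r) at_top"
    using F_u_tendsto_at_top by (intro order_tendstoD(1)) auto
  then obtain S where S: "\<And>s. s \<ge> S \<Longrightarrow> F (u s) > energy r"
    unfolding eventually_at_top_linorder by auto
  define s where "s = max S r"
  have s: "s \<ge> r" "F (u s) > energy r" using S[of s] unfolding s_def by auto
  have "energy s \<le> energy r" using energy_antimono[OF r s(1)] .
  moreover have "(u' s)\<^sup>2 \<ge> 0" by simp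
  ultimately show False using s(2) unfolding energy_def by linarith
qed

lemma F_u0_nonneg: "F (u 0) \<ge> 0"
proof -
  have "((\<lambda>s. F (u s)) \<longlongrightarrow> F (u 0)) (at 0 within {0..})"
    using F_u_cont unfolding continuous_on_def by simp
  then have "((\<lambda>s. F (u s)) \<longlongrightarrow> F (u 0)) (at_right 0)"
    by (rule tendsto_within_subset) auto
  then have "(energy \<longlongrightarrow> 0\<^sup>2 / 2 + F (u 0)) (at_right 0)"
    unfolding energy_def[abs_def] by (intro tendsto_intros u'_tendsto_0) auto
  moreover have "eventually (\<lambda>s. 0 \<le> energy s) (at_right (0::real))"
    unfolding eventually_at_right_field by (intro exI[of _ 1]) (simp add: energy_nonneg)
  ultimately show ?thesis by (simp add: tendsto_lowerbound)
qed

text \<open>Near the origin the sign of u' is opposite to the sign of f(u(0)): the flux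
  -\<sigma> r^(n-1) u' is strictly increasing from 0 when \<sigma> f(u(0)) > 0.\<close>

lemma u'_sign_near_0:
  assumes sf: "\<sigma> * f (u 0) > 0"
  shows "\<exists>\<delta>>0. \<forall>y. 0 < y \<longrightarrow> y < \<delta> \<longrightarrow> \<sigma> * u' y < 0"
proof -
  have "((\<lambda>s. \<sigma> * f (u s)) \<longlongrightarrow> \<sigma> * f (u 0)) (at 0 within {0..})"
    using f_u_cont unfolding continuous_on_def by (auto intro: tendsto_intros)
  then have "eventually (\<lambda>s. \<sigma> * f (u s) > 0) (at 0 within {0..})"
    using sf by (rule order_tendstoD)
  then obtain \<delta> where \<delta>: "\<delta> > 0"
    "\<And>s. s \<in> {0..} \<Longrightarrow> s \<noteq> 0 \<Longrightarrow> dist s 0 < \<delta> \<Longrightarrow> \<sigma> * f (u s) > 0"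
    unfolding eventually_at by auto
  define W where "W s = - \<sigma> * (s ^ (n - 1) * u' s)" for s
  have W_mono: "W x < W y" if xy: "0 < x" "x < y" "y < \<delta>" for x y
  proof (rule DERIV_pos_imp_increasing_open[OF xy(2)])
    have der: "(W has_real_derivative - \<sigma> * - (t ^ (n - 1) * f (u t))) (at t)" if "t > 0" for t
      unfolding W_def[abs_def] by (intro DERIV_cmult flux_deriv that)
    show "continuous_on {x..y} W"
      using xy by (intro continuous_at_imp_continuous_on ballI DERIV_isCont[OF der]) auto
    fix t assume t: "x < t" "t < y"
    then have "0 < t ^ (n - 1) * (\<sigma> * f (u t))"
      using \<delta>(2)[of t] xy by (simp add: dist_real_def)
    then show "\<exists>d. (W has_real_derivative d) (at t) \<and> 0 < d"
      using der[of t] t xy by (auto simp: algebra_simps)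
  qed
  have "(W \<longlongrightarrow> - \<sigma> * (0 ^ (n - 1) * 0)) (at_right 0)"
    unfolding W_def[abs_def] by (intro tendsto_intros u'_tendsto_0)
  then have W_lim: "(W \<longlongrightarrow> 0) (at_right 0)" by simp
  show ?thesis
  proof (intro exI[of _ \<delta>] conjI allI impI \<delta>(1))
    fix y assume y: "0 < y" "y < \<delta>"
    have "W y > 0" using pos_if_strict_mono_from_zero[OF W_mono W_lim y] .
    then have "y ^ (n - 1) * (\<sigma> * u' y) < 0" unfolding W_def by (simp add: algebra_simps)
    then show "\<sigma> * u' y < 0" using y by (simp add: mult_less_0_iff)
  qed
qed


text \<open>At a critical point r > 0 the equation reads u'' = -f(u); a one-sided minimum (maximum)
  therefore forces f(u) \<le> 0 (\<ge> 0).\<close>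

lemma fquot_at_right_min:
  assumes rm: "rm > 0" and d: "d > 0" and crit: "u' rm = 0"
    and min: "\<And>s. rm \<le> s \<Longrightarrow> s \<le> rm + d \<Longrightarrow> u rm \<le> u s"
  shows "fquot \<omega> p q (u rm) \<le> 0"
proof (rule ccontr)
  assume "\<not> ?thesis"
  then have "u'' rm < 0"
    using u''_eq[OF rm] crit nonlin_eq_fquot[OF p pq pos[of rm]] pos[of rm] rm by simp
  from DERIV_neg_dec_right[OF d2[OF rm] this] obtain d' where
    d': "d' > 0" "\<And>h. h > 0 \<Longrightarrow> h < d' \<Longrightarrow> u' (rm + h) < u' rm" by auto
  define h where "h = min d (d' / 2)"
  have h: "0 < h" "h \<le> d" "h < d'" using d d' unfolding h_def by auto
  have "u (rm + h) < u rm"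
  proof (rule u_strict_antimono_on)
    fix x assume "rm < x" "x < rm + h"
    then show "u' x < 0" using d'(2)[of "x - rm"] h crit by auto
  qed (use rm h in auto)
  then show False using min[of "rm + h"] h by auto
qed

lemma fquot_at_right_max:
  assumes rm: "rm > 0" and d: "d > 0" and crit: "u' rm = 0"
    and max: "\<And>s. rm \<le> s \<Longrightarrow> s \<le> rm + d \<Longrightarrow> u s \<le> u rm"
  shows "fquot \<omega> p q (u rm) \<ge> 0"
proof (rule ccontr)
  assume "\<not> ?thesis"
  then have "u'' rm > 0"
    using u''_eq[OF rm] crit nonlin_eq_fquot[OF p pq pos[of rm]] pos[of rm] rm
    by (simp add: mult_pos_neg)
  from DERIV_pos_inc_right[OF d2[OF rm] this] obtain d' where
    d': "d' > 0" "\<And>h. h > 0 \<Longrightarrow> h < d' \<Longrightarrow> u' rm < u' (rm + h)" by auto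
  define h where "h = min d (d' / 2)"
  have h: "0 < h" "h \<le> d" "h < d'" using d d' unfolding h_def by auto
  have "u rm < u (rm + h)"
  proof (rule u_strict_mono_on)
    fix x assume "rm < x" "x < rm + h"
    then show "u' x > 0" using d'(2)[of "x - rm"] h crit by auto
  qed (use rm h in auto)
  then show False using max[of "rm + h"] h by auto
qed

text \<open>If u were increasing somewhere, say u'(r1) > 0, then the minimum of u on [0,r1]
  and the maximum of u on [r1,\<infinity>) would produce values a < b forbidden by
  no_min_below_max.\<close>

lemma min_value_before_increase:
  assumes r1: "r1 > 0" and up: "u' r1 > 0"
  shows "\<exists>a. 0 < a \<and> a < u r1 \<and> fquot \<omega> p q a \<le> 0 \<and> F a \<ge> 0"
proof -
  have "continuous_on {0..r1} u" using u_cont by (rule continuous_on_subset) auto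
  then obtain rm where rm: "rm \<in> {0..r1}" "\<And>s. s \<in> {0..r1} \<Longrightarrow> u rm \<le> u s"
    using continuous_attains_inf[OF compact_Icc, of 0 r1 u] r1 by auto
  obtain dl where dl: "dl > 0" "\<And>h. h > 0 \<Longrightarrow> h < dl \<Longrightarrow> u (r1 - h) < u r1"
    using DERIV_pos_inc_left[OF u_deriv[OF r1] up] by auto
  define h where "h = min dl r1 / 2"
  have h: "0 < h" "h < dl" "h \<le> r1" using dl(1) r1 unfolding h_def by auto
  have below: "u rm < u r1" using rm(2)[of "r1 - h"] dl(2)[OF h(1,2)] h by auto
  have "fquot \<omega> p q (u rm) \<le> 0 \<and> F (u rm) \<ge> 0"
  proof (cases "rm = 0")
    case True
    have "fquot \<omega> p q (u 0) \<le> 0"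
    proof (rule ccontr)
      assume "\<not> ?thesis"
      then have "1 * f (u 0) > 0" using nonlin_eq_fquot[OF p pq pos[of 0]] pos[of 0] by simp
      then obtain \<delta> where \<delta>: "\<delta> > 0" "\<And>y. 0 < y \<Longrightarrow> y < \<delta> \<Longrightarrow> 1 * u' y < 0"
        using u'_sign_near_0 by blast
      define y where "y = min \<delta> r1 / 2"
      have y: "0 < y" "y < \<delta>" "y \<le> r1" using \<delta>(1) r1 unfolding y_def by auto
      have "u y < u 0" by (rule u_strict_antimono_on) (use \<delta> y in auto)
      then show False using rm(2)[of y] True y by auto
    qed
    then show ?thesis using F_u0_nonneg True by simp
  next
    case False
    then have rm0: "0 < rm" "rm < r1" using rm below by (auto simp: order.order_iff_strict)
    have crit: "u' rm = 0"
    proof (rule DERIV_local_min[OF u_deriv[OF rm0(1)], of "min rm (r1 - rm)"])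
      show "0 < min rm (r1 - rm)" using rm0 by simp
      show "\<forall>y. \<bar>rm - y\<bar> < min rm (r1 - rm) \<longrightarrow> u rm \<le> u y"
      proof (intro allI impI)
        fix y assume "\<bar>rm - y\<bar> < min rm (r1 - rm)"
        then have "0 \<le> y" "y \<le> r1" by (auto simp: abs_less_iff)
        then show "u rm \<le> u y" using rm(2) by auto
      qed
    qed
    have "fquot \<omega> p q (u rm) \<le> 0"
      by (rule fquot_at_right_min[OF rm0(1) _ crit, of "r1 - rm"]) (use rm rm0 in auto)
    moreover have "F (u rm) \<ge> 0" using energy_nonneg[OF rm0(1)] crit unfolding energy_def by simp
    ultimately show ?thesis by simp
  qed
  then show ?thesis using below pos[of rm] rm by (intro exI[of _ "u rm"]) auto
qed

lemma max_value_after_increase: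
  assumes r1: "r1 > 0" and up: "u' r1 > 0"
  shows "\<exists>b. u r1 \<le> b \<and> fquot \<omega> p q b \<ge> 0"
proof -
  have "eventually (\<lambda>s. u s < u r1) at_top" using lim pos[of r1] r1 by (intro order_tendstoD(2)) auto
  then obtain R where R: "\<And>s. s \<ge> R \<Longrightarrow> u s < u r1" unfolding eventually_at_top_linorder by auto
  define R' where "R' = max R r1"
  have "continuous_on {r1..R'} u" using u_cont by (rule continuous_on_subset) (use r1 in auto)
  then obtain rM where rM: "rM \<in> {r1..R'}" "\<And>s. s \<in> {r1..R'} \<Longrightarrow> u s \<le> u rM"
    using continuous_attains_sup[OF compact_Icc, of r1 R' u] unfolding R'_def by auto
  have max: "u s \<le> u rM" if "s \<ge> r1" for s
  proof (cases "s \<le> R'")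
    case False
    then show ?thesis using R[of s] rM(2)[of r1] unfolding R'_def by force
  qed (use rM that in auto)
  obtain dr where dr: "dr > 0" "\<And>h. h > 0 \<Longrightarrow> h < dr \<Longrightarrow> u r1 < u (r1 + h)"
    using DERIV_pos_inc_right[OF u_deriv[OF r1] up] by auto
  have "rM \<noteq> r1" using dr(2)[of "dr / 2"] dr(1) max[of "r1 + dr / 2"] by auto
  then have rM0: "rM > r1" using rM by simp
  have crit: "u' rM = 0"
    by (rule DERIV_local_max[OF u_deriv, of rM "rM - r1"]) (use rM0 r1 max in auto)
  have "fquot \<omega> p q (u rM) \<ge> 0"
    by (rule fquot_at_right_max[OF _ _ crit, of 1]) (use rM0 r1 max in auto)
  then show ?thesis using max[of r1] by auto
qed

theorem u'_nonpos:
  assumes r: "r > 0"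
  shows "u' r \<le> 0"
proof (rule ccontr)
  assume "\<not> ?thesis"
  then have up: "u' r > 0" by simp
  obtain a where a: "0 < a" "a < u r" "fquot \<omega> p q a \<le> 0" "F a \<ge> 0"
    using min_value_before_increase[OF r up] by auto
  obtain b where b: "u r \<le> b" "fquot \<omega> p q b \<ge> 0"
    using max_value_after_increase[OF r up] by auto
  show False using no_min_below_max[OF p pq a(1) _ a(3,4) b(2)] a(2) b(1) by simp
qed

lemma u_antimono:
  assumes "0 \<le> x" "x \<le> y"
  shows "u y \<le> u x"
proof -
  have "- u x \<le> - u y"
  proof (rule DERIV_nonneg_imp_increasing_open[OF assms(2), of "\<lambda>s. - u s"])
    show "continuous_on {x..y} (\<lambda>s. - u s)"
      using u_cont by (intro continuous_intros) (rule continuous_on_subset, use assms in auto)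
    fix t assume "x < t" "t < y"
    then have t: "t > 0" using assms by simp
    show "\<exists>d. ((\<lambda>s. - u s) has_real_derivative d) (at t) \<and> 0 \<le> d"
      using DERIV_minus[OF u_deriv[OF t]] u'_nonpos[OF t] by auto
  qed
  then show ?thesis by simp
qed

lemma fquot_u0_nonneg: "fquot \<omega> p q (u 0) \<ge> 0"
proof (rule ccontr)
  assume "\<not> ?thesis"
  then have "(-1) * f (u 0) > 0" using nonlin_eq_fquot[OF p pq pos[of 0]] pos[of 0]
    by (simp add: mult_pos_neg)
  then obtain \<delta> where \<delta>: "\<delta> > 0" "\<And>y. 0 < y \<Longrightarrow> y < \<delta> \<Longrightarrow> (-1) * u' y < 0"
    using u'_sign_near_0 by blast
  then have "u' (\<delta> / 2) > 0" by simp
  then show False using u'_nonpos[of "\<delta> / 2"] \<delta>(1) by simp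
qed


abbreviation "P \<equiv> Pohozaev n \<omega> p q u u'"

lemma P_deriv:
  assumes r: "r > 0"
  shows "(P has_real_derivative r ^ (n - 1) * ((u r)\<^sup>2 * gpoh n \<omega> p q (u r))) (at r)"
proof -
  have "(P has_real_derivative
      real n * r ^ (n - 1) * ((u' r)\<^sup>2 + 2 * F (u r)) + r ^ n * (2 * u' r * u'' r + 2 * (f (u r) * u' r))
      + (real n - 2) * ((real (n - 1) * r ^ (n - 1 - 1) * u r + r ^ (n - 1) * u' r) * u' r
                        + r ^ (n - 1) * u r * u'' r)) (at r)"
    unfolding Pohozaev_def[abs_def]
    by (auto intro!: derivative_eq_intros d2[OF r] u_deriv[OF r] F_u_deriv[OF r]
             simp: algebra_simps power2_eq_square)
  moreover have "r ^ n = r * r ^ (n - 1)" using n by (cases n) auto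
  then have "real n * r ^ (n - 1) * ((u' r)\<^sup>2 + 2 * F (u r)) + r ^ n * (2 * u' r * u'' r + 2 * (f (u r) * u' r))
      + (real n - 2) * ((real (n - 1) * r ^ (n - 1 - 1) * u r + r ^ (n - 1) * u' r) * u' r
                        + r ^ (n - 1) * u r * u'' r)
      = r ^ (n - 1) * (2 * real n * F (u r) - (real n - 2) * u r * f (u r))"
    unfolding power_pred_deriv_factor[OF n r] u''_eq[OF r] using r
    by (simp only:) (simp add: field_simps power2_eq_square)
  moreover have "2 * real n * F (u r) - (real n - 2) * u r * f (u r) = (u r)\<^sup>2 * gpoh n \<omega> p q (u r)"
    using gpoh_identity[OF p pq pos[of r]] r by simp
  ultimately show ?thesis by simp
qed

lemma P_cont: "a > 0 \<Longrightarrow> continuous_on {a..b} P"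
  by (intro continuous_at_imp_continuous_on ballI DERIV_isCont[OF P_deriv]) auto

lemma P_tendsto_0_at_0: "(P \<longlongrightarrow> 0) (at_right 0)"
proof -
  have "((\<lambda>s. F (u s)) \<longlongrightarrow> F (u 0)) (at 0 within {0..})"
    using F_u_cont unfolding continuous_on_def by simp
  then have "((\<lambda>s. F (u s)) \<longlongrightarrow> F (u 0)) (at_right 0)"
    by (rule tendsto_within_subset) auto
  then have "(P \<longlongrightarrow> 0 ^ n * (0\<^sup>2 + 2 * F (u 0)) + (real n - 2) * 0 ^ (n - 1) * u 0 * 0) (at_right 0)"
    unfolding Pohozaev_def[abs_def] by (intro tendsto_intros u'_tendsto_0 u_tendsto_u0)
  then show ?thesis using n by (simp add: power_0_left)
qed

(* Far out u is small, so f(u) \<le> -\<omega> u/2 and u'' \<ge> (\<omega>/2) u, using u' \<le> 0. *)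
lemma u_eventually_convex:
  "\<exists>R\<ge>1. \<forall>r\<ge>R. u r \<le> 1 \<and> u'' r \<ge> (sqrt (\<omega> / 2))\<^sup>2 * u r"
proof -
  obtain \<sigma> where \<sigma>: "\<sigma> > 0" "\<And>s. 0 < s \<Longrightarrow> s \<le> \<sigma> \<Longrightarrow> fquot \<omega> p q s \<le> - \<omega> / 2"
    using fquot_small[OF p pq om] by auto
  have "eventually (\<lambda>s. u s < min \<sigma> 1) at_top" using lim \<sigma> by (intro order_tendstoD(2)) auto
  then obtain R0 where R0: "\<And>s. s \<ge> R0 \<Longrightarrow> u s < min \<sigma> 1"
    unfolding eventually_at_top_linorder by auto
  show ?thesis
  proof (intro exI[of _ "max R0 1"] conjI allI impI)
    fix r assume "max R0 1 \<le> r"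
    then have r: "r > 0" "u r < \<sigma>" "u r < 1" using R0[of r] by auto
    have "u r * fquot \<omega> p q (u r) \<le> u r * (- \<omega> / 2)"
      using \<sigma>(2)[of "u r"] r pos[of r] by (intro mult_left_mono) auto
    then have "f (u r) \<le> - (\<omega> / 2) * u r" using nonlin_eq_fquot[OF p pq pos[of r]] r
      by (simp add: algebra_simps)
    moreover have "(real n - 1) / r * u' r \<le> 0"
      using u'_nonpos[OF r(1)] n r by (intro mult_nonneg_nonpos) auto
    ultimately show "u'' r \<ge> (sqrt (\<omega> / 2))\<^sup>2 * u r" using u''_eq[OF r(1)] om by simp
    show "u r \<le> 1" using r by simp
  qed simp
qed

lemma P_tendsto_0_at_top: "(P \<longlongrightarrow> 0) at_top"
proof -
  define c where "c = sqrt (\<omega> / 2)"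
  have c: "c > 0" unfolding c_def using om by simp
  obtain R where R: "R \<ge> 1" "\<And>r. r \<ge> R \<Longrightarrow> u r \<le> 1 \<and> u'' r \<ge> c\<^sup>2 * u r"
    using u_eventually_convex unfolding c_def by auto
  have decay_hyps: "\<And>r. r \<ge> R \<Longrightarrow> u r > 0" "\<And>r. r \<ge> R \<Longrightarrow> u' r \<le> 0"
    "\<And>r. r \<ge> R \<Longrightarrow> (u has_real_derivative u' r) (at r)"
    "\<And>r. r \<ge> R \<Longrightarrow> (u' has_real_derivative u'' r) (at r)"
    "\<And>r. r \<ge> R \<Longrightarrow> u'' r \<ge> c\<^sup>2 * u r"
    using R pos u'_nonpos u_deriv d2 by auto
  define A where "A = u R * exp (c * R)"
  define A' where "A' = u R * exp (c * R) * exp c"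
  have u_decay: "u r \<le> A * exp (- (c * r))" if "r \<ge> R" for r
    using decay_value[OF c decay_hyps lim that] unfolding A_def .
  have u'_decay: "\<bar>u' r\<bar> \<le> A' * exp (- (c * r))" if "r \<ge> R + 1" for r
    using decay_slope[OF c decay_hyps lim that] unfolding A'_def .
  define K where "K = \<omega> / 2 + 2"
  define M where "M = A'\<^sup>2 + 2 * K * A\<^sup>2 + \<bar>real n - 2\<bar> * A * A'"
  have bound: "\<bar>P r\<bar> \<le> M * (r ^ n * exp (- (2 * c * r)))" if r: "r \<ge> R + 1" for r
  proof -
    define e where "e = exp (- (c * r))"
    have e: "e > 0" "e * e = exp (- (2 * c * r))" unfolding e_def by (auto simp: exp_add[symmetric])
    have r1: "r \<ge> 1" "r > 0" using r R by auto
    have ub: "0 < u r" "u r \<le> A * e" "u r \<le> 1" using pos[of r] u_decay[of r] R(2)[of r] r R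
      unfolding e_def by auto
    have u'b: "\<bar>u' r\<bar> \<le> A' * e" using u'_decay[OF r] unfolding e_def .
    have F_bound: "\<bar>F (u r)\<bar> \<le> K * (A * e)\<^sup>2"
    proof -
      have "\<bar>F (u r)\<bar> \<le> K * (u r)\<^sup>2"
        using Prim_quadratic_bound[OF p pq, of \<omega> "u r"] om ub unfolding K_def by simp
      also have "\<dots> \<le> K * (A * e)\<^sup>2" unfolding K_def using ub om
        by (intro mult_left_mono power_mono) auto
      finally show ?thesis .
    qed
    have "\<bar>P r\<bar> \<le> r ^ n * ((u' r)\<^sup>2 + 2 * \<bar>F (u r)\<bar>) + \<bar>real n - 2\<bar> * r ^ (n - 1) * \<bar>u r * u' r\<bar>"
    proof -
      have "\<bar>(u' r)\<^sup>2 + 2 * F (u r)\<bar> \<le> (u' r)\<^sup>2 + 2 * \<bar>F (u r)\<bar>"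
        using abs_triangle_ineq[of "(u' r)\<^sup>2" "2 * F (u r)"] by simp
      then have "\<bar>r ^ n * ((u' r)\<^sup>2 + 2 * F (u r))\<bar> \<le> r ^ n * ((u' r)\<^sup>2 + 2 * \<bar>F (u r)\<bar>)"
        using r1 unfolding abs_mult by (intro mult_mono) auto
      moreover have "\<bar>(real n - 2) * r ^ (n - 1) * u r * u' r\<bar> = \<bar>real n - 2\<bar> * r ^ (n - 1) * \<bar>u r * u' r\<bar>"
        using r1 by (simp add: abs_mult)
      ultimately show ?thesis unfolding Pohozaev_def by linarith
    qed
    also have "\<dots> \<le> r ^ n * ((A' * e)\<^sup>2 + 2 * (K * (A * e)\<^sup>2)) + \<bar>real n - 2\<bar> * r ^ n * ((A * e) * (A' * e))"
    proof (intro add_mono mult_left_mono mult_mono)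
      show "(u' r)\<^sup>2 \<le> (A' * e)\<^sup>2" using u'b by (metis abs_ge_zero power2_abs power_mono)
      show "r ^ (n - 1) \<le> r ^ n" using r1 by (intro power_increasing) auto
      show "\<bar>u r * u' r\<bar> \<le> (A * e) * (A' * e)"
        unfolding abs_mult using ub u'b by (intro mult_mono) auto
    qed (use F_bound r1 in auto)
    also have "\<dots> = M * (r ^ n * (e * e))" unfolding M_def by (simp add: algebra_simps power2_eq_square)
    finally show ?thesis using e by simp
  qed
  have "eventually (\<lambda>r. norm (P r) \<le> M * (r ^ n * exp (- (2 * c * r)))) at_top"
    using eventually_ge_at_top[of "R + 1"] by eventually_elim (simp add: bound)
  moreover have "((\<lambda>r. M * (r ^ n * exp (- (2 * c * r)))) \<longlongrightarrow> M * 0) at_top"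
    using power_times_exp_tendsto_0[of "2 * c" n] c by (intro tendsto_intros) (simp add: algebra_simps)
  ultimately show ?thesis by (simp add: Lim_null_comparison)
qed


text \<open>Positivity of P. Since u decreases from u(0) \<le> beta to 0 and g changes sign only once
  below beta, P first increases from 0 and then decreases to 0.\<close>

lemma P_pos_while_gpoh_pos:
  assumes r: "r > 0" and g: "\<And>x. 0 < x \<Longrightarrow> x \<le> r \<Longrightarrow> gpoh n \<omega> p q (u x) > 0"
  shows "P r > 0"
proof -
  have inc: "P x < P y" if "0 < x" "x < y" "y \<le> r" for x y
  proof (rule DERIV_pos_imp_increasing_open[OF that(2)])
    show "continuous_on {x..y} P" using P_cont that by simp
    fix t assume "x < t" "t < y"
    then have t: "t > 0" "t \<le> r" using that by auto
    have "t ^ (n - 1) * ((u t)\<^sup>2 * gpoh n \<omega> p q (u t)) > 0" using g[OF t] pos[of t] t by simp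
    then show "\<exists>d. (P has_real_derivative d) (at t) \<and> 0 < d" using P_deriv[OF t(1)] by auto
  qed
  have "P (r / 2) > 0"
    by (rule pos_if_strict_mono_from_zero[OF _ P_tendsto_0_at_0, of r]) (use inc r in auto)
  also have "P (r / 2) < P r" using inc[of "r / 2" r] r by simp
  finally show ?thesis .
qed

lemma P_pos_after_gpoh_nonpos:
  assumes r: "r > 0" and x: "0 < x" "x \<le> r" "gpoh n \<omega> p q (u x) \<le> 0"
  shows "P r > 0"
proof -
  obtain \<beta> where \<beta>: "fquot_top p q < \<beta>" "fquot \<omega> p q \<beta> = 0"
    using fquot_zero_beyond_top[OF p pq om omb] by auto
  have u0: "u 0 \<le> \<beta>"
    using fquot_nonneg_imp_le[OF p pq \<beta> pos[of 0] fquot_u0_nonneg] by simp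
  have g_nonpos: "gpoh n \<omega> p q (u y) \<le> 0" if "y \<ge> r" for y
    using gpoh_single_crossing[OF p pq om, of "u y" "u x" \<beta> n] gpoh_beta_pos[OF p pq \<beta> omb n]
      x r that pos[of y] u_antimono[of x y] u_antimono[of 0 x] u0
    by auto
  have P_antimono: "P b \<le> P a" if "r \<le> a" "a \<le> b" for a b
  proof (rule DERIV_nonpos_imp_nonincreasing[OF that(2)])
    fix t assume "a \<le> t" "t \<le> b"
    then have t: "t > 0" "t \<ge> r" using that r by auto
    have "t ^ (n - 1) * ((u t)\<^sup>2 * gpoh n \<omega> p q (u t)) \<le> 0"
      using g_nonpos[OF t(2)] t by (simp add: mult_nonneg_nonpos)
    then show "\<exists>d. (P has_real_derivative d) (at t) \<and> d \<le> 0" using P_deriv[OF t(1)] by auto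
  qed
  obtain \<sigma> where \<sigma>: "\<sigma> > 0" "\<And>s. 0 < s \<Longrightarrow> s \<le> \<sigma> \<Longrightarrow> gpoh n \<omega> p q s < 0"
    using gpoh_small[OF p pq om] by auto
  have "eventually (\<lambda>s. u s < \<sigma>) at_top" using lim \<sigma> by (intro order_tendstoD(2)) auto
  then obtain R0 where R0: "\<And>s. s \<ge> R0 \<Longrightarrow> u s < \<sigma>" unfolding eventually_at_top_linorder by auto
  define R where "R = max r R0"
  have R: "R \<ge> r" "R > 0" unfolding R_def using r by auto
  have "P (R + 1) < P R"
  proof (rule DERIV_neg_imp_decreasing_open[of R "R + 1"])
    show "continuous_on {R..R + 1} P" using P_cont R by simp
    fix t assume "R < t" "t < R + 1"
    then have t: "t > 0" "u t < \<sigma>" using R R0[of t] unfolding R_def by auto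
    have "t ^ (n - 1) * ((u t)\<^sup>2 * gpoh n \<omega> p q (u t)) < 0"
      using \<sigma>(2)[of "u t"] t pos[of t] by (simp add: mult_pos_neg)
    then show "\<exists>d. (P has_real_derivative d) (at t) \<and> d < 0" using P_deriv[OF t(1)] by auto
  qed simp
  moreover have "0 \<le> P (R + 1)"
  proof (rule tendsto_upperbound[OF P_tendsto_0_at_top])
    show "eventually (\<lambda>s. P s \<le> P (R + 1)) at_top"
      using eventually_ge_at_top[of "R + 1"] by eventually_elim (use P_antimono R in auto)
  qed simp
  ultimately show ?thesis using P_antimono[of R R] P_antimono[of r R] R by linarith
qed

theorem P_pos: "r > 0 \<Longrightarrow> P r > 0"
  using P_pos_while_gpoh_pos P_pos_after_gpoh_nonpos by (meson not_le)

end

theorem corollary3p2: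
  fixes n :: nat and p q \<omega> :: real and u u' u'' :: "real \<Rightarrow> real"
  assumes n: "n \<ge> 1"
    and pq: "1 < p" "p < q"
    and om: "0 < \<omega>" "\<omega> < omega_pq p q"
    and pos: "\<And>r. r \<ge> 0 \<Longrightarrow> u r > 0"
    and d1: "\<And>r. r \<ge> 0 \<Longrightarrow> (u has_real_derivative u' r) (at r within {0..})"
    and d2: "\<And>r. r > 0 \<Longrightarrow> (u' has_real_derivative u'' r) (at r)"
    and ode: "\<And>r. r > 0 \<Longrightarrow> u'' r + (real n - 1) / r * u' r + nonlin \<omega> p q (u r) = 0"
    and init: "u' 0 = 0"
    and lim: "(u \<longlongrightarrow> 0) at_top"
  shows "\<forall>r > 0. Pohozaev n \<omega> p q u u' r > 0"
proof -
  interpret ground_state n p q \<omega> u u' u''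
    using assms by unfold_locales auto
  show ?thesis using P_pos by blast
qed

end
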